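(* Suppose $G_n=([n],E_n)$ is generated from the graphon $W_n=\rho_nW$ and write $\bar W(x)=\int_0^1W(x,y)dy$. Then for all $t\in(0,1)$, $$\mathbb P\Big(\sup_{i\le n}\Big|\frac{|N(i)|}{n-1}-\rho_n\bar W(\omega_i)\Big|\ge\rho_nt\Big)\le2n\Big(e^{-\frac{(n-1)\rho_nt^2}{3}}+e^{-2(n-1)t^2}\Big).$$
   Context: Graphon model: $W:[0,1]^2\to[0,1]$ symmetric measurable, $\rho_n\in(0,1]$, latent $\omega_1,\dots,\omega_n$ i.i.d. Unif$[0,1]$, edges conditionally independent with probability $\rho_nW(\omega_i,\omega_j)$. $|N(i)|$ is the degree of vertex $i$. *)

theory Defs
  imports "HOL-Probability.Probability"
begin

text \<open>Sample space of the graphon model on vertex set {0..<n}: latent positions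
  omega_i, i < n, i.i.d. uniform on [0,1], and auxiliary uniforms U_(i,j), i < j < n,
  independent of everything; the edge {i,j} is present iff U_(i,j) < rho W(omega_i, omega_j).
  Conditionally on omega, the edges are independent with probability rho W(omega_i,omega_j).\<close>

definition graphon_space :: "nat \<Rightarrow> ((nat \<Rightarrow> real) \<times> (nat \<times> nat \<Rightarrow> real)) measure" where
  "graphon_space n =
     (PiM {..<n} (\<lambda>_. uniform_measure lborel {0..1::real}))
     \<Otimes>\<^sub>M (PiM {(i,j). i < j \<and> j < n} (\<lambda>_. uniform_measure lborel {0..1::real}))"

definition graphon_adj ::
  "real \<Rightarrow> (real \<Rightarrow> real \<Rightarrow> real) \<Rightarrow> (nat \<Rightarrow> real) \<times> (nat \<times> nat \<Rightarrow> real) \<Rightarrow> nat \<Rightarrow> nat \<Rightarrow> bool" where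
  "graphon_adj \<rho> W x i j \<longleftrightarrow>
     i \<noteq> j \<and> snd x (min i j, max i j) < \<rho> * W (fst x i) (fst x j)"

definition graphon_degree ::
  "nat \<Rightarrow> real \<Rightarrow> (real \<Rightarrow> real \<Rightarrow> real) \<Rightarrow> (nat \<Rightarrow> real) \<times> (nat \<times> nat \<Rightarrow> real) \<Rightarrow> nat \<Rightarrow> nat" where
  "graphon_degree n \<rho> W x i = card {j \<in> {..<n}. graphon_adj \<rho> W x i j}"

definition Wbar :: "(real \<Rightarrow> real \<Rightarrow> real) \<Rightarrow> real \<Rightarrow> real" where
  "Wbar W x = (LINT y:{0..1}|lborel. W x y)"

end

theory Submission
  imports Defs
begin

(* Conditionally on the latent positions, |N(i)| is a sum of n - 1 independent Bernoulli variables
   with means rho W(omega_i, omega_j).  Integrating out the omega_j (j ~= i), which are independent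
   of omega_i, bounds the moment generating function of |N(i)| - (n - 1) rho Wbar(omega_i) by
   exp((n - 1) rho (e^s - 1 - s)), that of a centred Poisson variable.  Chernoff's bound with
   s = ln(1 + t) and s = -t bounds each of the two tails by exp(-(n - 1) rho t^2 / 3), and a union
   bound over the n vertices concludes. *)

lemma ln_one_plus_ge:
  fixes t :: real
  assumes "0 \<le> t"
  shows "2 * t / (2 + t) \<le> ln (1 + t)"
proof -
  let ?g = "\<lambda>x::real. ln (1 + x) - 2 * x / (2 + x)"
  have "?g 0 \<le> ?g t"
  proof (rule DERIV_nonneg_imp_nondecreasing[OF assms])
    fix x :: real
    assume x: "0 \<le> x" "x \<le> t"
    have "DERIV ?g x :> 1 / (1 + x) - 4 / (2 + x)\<^sup>2"
      using x by (auto intro!: derivative_eq_intros simp: field_simps power2_eq_square)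
    moreover have "4 / (2 + x)\<^sup>2 \<le> 1 / (1 + x)"
      using x by (simp add: divide_simps power2_eq_square algebra_simps)
    ultimately show "\<exists>y. DERIV ?g x :> y \<and> 0 \<le> y"
      by auto
  qed
  then show ?thesis
    by simp
qed

lemma exp_minus_le_quadratic:
  fixes t :: real
  assumes "0 \<le> t"
  shows "exp (- t) \<le> 1 - t + t\<^sup>2 / 2"
proof -
  let ?g = "\<lambda>x::real. 1 - x + x\<^sup>2 / 2 - exp (- x)"
  have "?g 0 \<le> ?g t"
  proof (rule DERIV_nonneg_imp_nondecreasing[OF assms])
    fix x :: real
    have "DERIV ?g x :> x - 1 + exp (- x)"
      by (auto intro!: derivative_eq_intros simp: power2_eq_square)
    moreover have "0 \<le> x - 1 + exp (- x)"
      using exp_ge_add_one_self[of "- x"] by linarith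
    ultimately show "\<exists>y. DERIV ?g x :> y \<and> 0 \<le> y"
      by auto
  qed
  then show ?thesis
    by simp
qed

lemma upper_tail_exponent_le:
  fixes t :: real
  assumes "0 \<le> t" "t \<le> 1"
  shows "t - (1 + t) * ln (1 + t) \<le> - (t\<^sup>2 / 3)"
proof -
  have "t\<^sup>2 * t \<le> t\<^sup>2"
    using assms by (simp add: mult_left_le)
  then have "t + t\<^sup>2 / 3 \<le> (1 + t) * (2 * t / (2 + t))"
    using assms by (simp add: field_simps power2_eq_square)
  also have "\<dots> \<le> (1 + t) * ln (1 + t)"
    using assms ln_one_plus_ge by (intro mult_left_mono) auto
  finally show ?thesis
    by simp
qed

lemma lower_tail_exponent_le:
  fixes t :: real
  assumes "0 \<le> t"
  shows "exp (- t) - 1 + t - t\<^sup>2 \<le> - (t\<^sup>2 / 3)"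
proof -
  have "0 \<le> t\<^sup>2"
    by simp
  then show ?thesis
    using exp_minus_le_quadratic[OF assms] by linarith
qed

lemma one_plus_exp_minus_one_mult_nonneg:
  fixes p s :: real
  assumes "0 \<le> p" "p \<le> 1"
  shows "0 \<le> 1 + (exp s - 1) * p"
proof -
  have "0 \<le> (1 - p) + exp s * p"
    using assms by simp
  then show ?thesis
    by (simp add: algebra_simps)
qed

lemma binomial_mgf_le_poisson_mgf:
  fixes p q s :: real and k :: nat
  assumes "0 \<le> p" "p \<le> q" "q \<le> 1"
  shows "exp (- (s * k * p)) * (1 + (exp s - 1) * p) ^ k \<le> exp (k * q * (exp s - 1 - s))"
proof -
  have "(1 + (exp s - 1) * p) ^ k \<le> exp ((exp s - 1) * p) ^ k"
    using assms by (intro power_mono exp_ge_add_one_self one_plus_exp_minus_one_mult_nonneg) auto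
  then have "exp (- (s * k * p)) * (1 + (exp s - 1) * p) ^ k
      \<le> exp (- (s * k * p)) * exp (k * ((exp s - 1) * p))"
    by (simp add: exp_of_nat_mult)
  also have "\<dots> = exp (k * p * (exp s - 1 - s))"
    by (simp flip: exp_add add: algebra_simps)
  also have "\<dots> \<le> exp (k * q * (exp s - 1 - s))"
  proof -
    have "0 \<le> exp s - 1 - s"
      using exp_ge_add_one_self[of s] by linarith
    then show ?thesis
      using assms by (intro exp_mono mult_right_mono mult_left_mono) simp_all
  qed
  finally show ?thesis .
qed

lemma ennreal_exp_mult_exp: "ennreal (exp a) * ennreal (exp b) = ennreal (exp (a + b))"
  by (simp add: exp_add ennreal_mult')

lemma (in prob_space) prob_abs_ge_le_of_poisson_mgf:
  fixes f :: "'a \<Rightarrow> real"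
  assumes [measurable]: "f \<in> borel_measurable M"
    and \<mu>: "0 \<le> \<mu>" and t: "0 < t" "t \<le> 1"
    and mgf: "\<And>s. (\<integral>\<^sup>+x. ennreal (exp (s * f x)) \<partial>M) \<le> ennreal (exp (\<mu> * (exp s - 1 - s)))"
  shows "prob {x \<in> space M. \<mu> * t \<le> \<bar>f x\<bar>} \<le> 2 * exp (- (\<mu> * t\<^sup>2 / 3))"
proof -
  have chernoff: "ennreal (exp (- s * a)) * (\<integral>\<^sup>+x. ennreal (exp (s * f x)) * indicator (space M) x \<partial>M)
      \<le> ennreal (exp (\<mu> * (exp s - 1 - s) - s * a))" for s a
  proof -
    have "(\<integral>\<^sup>+x. ennreal (exp (s * f x)) * indicator (space M) x \<partial>M) = (\<integral>\<^sup>+x. ennreal (exp (s * f x)) \<partial>M)"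
      by (intro nn_integral_cong) simp
    then have "ennreal (exp (- s * a)) * (\<integral>\<^sup>+x. ennreal (exp (s * f x)) * indicator (space M) x \<partial>M)
        \<le> ennreal (exp (- s * a)) * ennreal (exp (\<mu> * (exp s - 1 - s)))"
      using mgf by (simp add: mult_left_mono)
    then show ?thesis
      by (simp add: ennreal_exp_mult_exp algebra_simps)
  qed
  have upper: "prob {x \<in> space M. \<mu> * t \<le> f x} \<le> exp (- (\<mu> * t\<^sup>2 / 3))"
  proof -
    define s where "s = ln (1 + t)"
    have "emeasure M {x \<in> space M. \<mu> * t \<le> f x} \<le> ennreal (exp (\<mu> * (exp s - 1 - s) - s * (\<mu> * t)))"
      using t by (intro order.trans[OF Chernoff_ineq_nn_integral_ge chernoff]) (auto simp: s_def)
    also have "\<mu> * (exp s - 1 - s) - s * (\<mu> * t) = \<mu> * (t - (1 + t) * ln (1 + t))"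
      using t by (simp add: s_def algebra_simps)
    also have "\<dots> \<le> - (\<mu> * t\<^sup>2 / 3)"
      using \<mu> t upper_tail_exponent_le[of t] by (auto intro: mult_left_mono[of _ _ \<mu>, THEN order_trans])
    finally show ?thesis
      by (simp add: emeasure_eq_measure)
  qed
  have lower: "prob {x \<in> space M. f x \<le> - (\<mu> * t)} \<le> exp (- (\<mu> * t\<^sup>2 / 3))"
  proof -
    have "emeasure M {x \<in> space M. f x \<le> - (\<mu> * t)} \<le> ennreal (exp (\<mu> * (exp (- t) - 1 + t) - t * (\<mu> * t)))"
      using t chernoff[of "- t" "- (\<mu> * t)"] by (intro order.trans[OF Chernoff_ineq_nn_integral_le]) auto
    also have "\<mu> * (exp (- t) - 1 + t) - t * (\<mu> * t) = \<mu> * (exp (- t) - 1 + t - t\<^sup>2)"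
      by (simp add: algebra_simps power2_eq_square)
    also have "\<dots> \<le> - (\<mu> * t\<^sup>2 / 3)"
      using \<mu> t lower_tail_exponent_le[of t] by (auto intro: mult_left_mono[of _ _ \<mu>, THEN order_trans])
    finally show ?thesis
      by (simp add: emeasure_eq_measure)
  qed
  have "{x \<in> space M. \<mu> * t \<le> \<bar>f x\<bar>} = {x \<in> space M. \<mu> * t \<le> f x} \<union> {x \<in> space M. f x \<le> - (\<mu> * t)}"
    by auto
  then have "prob {x \<in> space M. \<mu> * t \<le> \<bar>f x\<bar>}
      \<le> prob {x \<in> space M. \<mu> * t \<le> f x} + prob {x \<in> space M. f x \<le> - (\<mu> * t)}"
    by (simp add: measure_Un_le)
  with upper lower show ?thesis
    by linarith
qed

lemma (in prob_space) prob_Max_ge_le_sum: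
  fixes f :: "'i \<Rightarrow> 'a \<Rightarrow> real"
  assumes "finite I" "I \<noteq> {}" and [measurable]: "\<And>i. i \<in> I \<Longrightarrow> f i \<in> borel_measurable M"
  shows "prob {x \<in> space M. a \<le> (MAX i\<in>I. f i x)} \<le> (\<Sum>i\<in>I. prob {x \<in> space M. a \<le> f i x})"
proof -
  have "{x \<in> space M. a \<le> (MAX i\<in>I. f i x)} \<subseteq> (\<Union>i\<in>I. {x \<in> space M. a \<le> f i x})"
  proof safe
    fix x
    assume "x \<in> space M" "a \<le> (MAX i\<in>I. f i x)"
    moreover obtain i where "i \<in> I" "(MAX i\<in>I. f i x) = f i x"
    proof -
      have "(MAX i\<in>I. f i x) \<in> (\<lambda>i. f i x) ` I"
        using assms(1,2) by (intro Max_in) auto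
      then show ?thesis
        using that by auto
    qed
    ultimately show "x \<in> (\<Union>i\<in>I. {x \<in> space M. a \<le> f i x})"
      by auto
  qed
  then have "prob {x \<in> space M. a \<le> (MAX i\<in>I. f i x)} \<le> prob (\<Union>i\<in>I. {x \<in> space M. a \<le> f i x})"
    using assms(1) by (intro finite_measure_mono sets.finite_UN) auto
  also have "\<dots> \<le> (\<Sum>i\<in>I. prob {x \<in> space M. a \<le> f i x})"
    using assms(1) by (intro finite_measure_subadditive_finite) auto
  finally show ?thesis .
qed

lemma nn_integral_PiM_prod_reindex:
  fixes M :: "'b measure" and e :: "'j \<Rightarrow> 'k" and \<phi> :: "'j \<Rightarrow> 'b \<Rightarrow> ennreal"
  assumes M: "prob_space M" and fin_P: "finite P" and e: "inj_on e J" "e ` J \<subseteq> P"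
    and \<phi>: "\<And>j. j \<in> J \<Longrightarrow> \<phi> j \<in> borel_measurable M"
  shows "(\<integral>\<^sup>+u. (\<Prod>j\<in>J. \<phi> j (u (e j))) \<partial>PiM P (\<lambda>_. M)) = (\<Prod>j\<in>J. integral\<^sup>N M (\<phi> j))"
proof -
  interpret product_prob_space "\<lambda>_. M"
    by (rule product_prob_spaceI) (rule M)
  interpret M: prob_space M
    by (rule M)
  define \<psi> where "\<psi> k = (if k \<in> e ` J then \<phi> (the_inv_into J e k) else (\<lambda>_. 1))" for k
  have \<psi>_e: "\<psi> (e j) = \<phi> j" if "j \<in> J" for j
    using that e(1) by (simp add: \<psi>_def the_inv_into_f_f)
  have prod_\<psi>: "(\<Prod>k\<in>P. F (\<psi> k) k) = (\<Prod>j\<in>J. F (\<phi> j) (e j))"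
    if "\<And>k. F (\<lambda>_. 1) k = 1" for F :: "('b \<Rightarrow> ennreal) \<Rightarrow> 'k \<Rightarrow> ennreal"
  proof -
    have "(\<Prod>k\<in>P. F (\<psi> k) k) = (\<Prod>k\<in>e ` J. F (\<psi> k) k)"
      using fin_P e(2) that by (intro prod.mono_neutral_right) (auto simp: \<psi>_def)
    also have "\<dots> = (\<Prod>j\<in>J. F (\<phi> j) (e j))"
      using e(1) by (simp add: prod.reindex \<psi>_e)
    finally show ?thesis .
  qed
  have "(\<integral>\<^sup>+u. (\<Prod>j\<in>J. \<phi> j (u (e j))) \<partial>PiM P (\<lambda>_. M)) = (\<integral>\<^sup>+u. (\<Prod>k\<in>P. \<psi> k (u k)) \<partial>PiM P (\<lambda>_. M))"
    using prod_\<psi>[of "\<lambda>F k. F (_ k)"] by simp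
  also have "\<dots> = (\<Prod>k\<in>P. integral\<^sup>N M (\<psi> k))"
    using fin_P \<phi> by (intro product_nn_integral_prod) (auto simp: \<psi>_def the_inv_into_into[OF e(1)])
  also have "\<dots> = (\<Prod>j\<in>J. integral\<^sup>N M (\<phi> j))"
    using prod_\<psi>[of "\<lambda>F k. integral\<^sup>N M F"] by (simp add: M.emeasure_space_1)
  finally show ?thesis .
qed

lemma nn_integral_PiM_insert_prod:
  fixes M :: "'b measure" and g :: "'b \<Rightarrow> ennreal" and h :: "'b \<Rightarrow> 'b \<Rightarrow> ennreal"
  assumes M: "prob_space M" and J: "finite J" "i \<notin> J"
    and [measurable]: "g \<in> borel_measurable M" and h: "(\<lambda>(a, y). h a y) \<in> borel_measurable (M \<Otimes>\<^sub>M M)"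
  shows "(\<integral>\<^sup>+\<omega>. g (\<omega> i) * (\<Prod>j\<in>J. h (\<omega> i) (\<omega> j)) \<partial>PiM (insert i J) (\<lambda>_. M))
       = (\<integral>\<^sup>+a. g a * (\<integral>\<^sup>+y. h a y \<partial>M) ^ card J \<partial>M)"
proof -
  interpret product_prob_space "\<lambda>_. M"
    by (rule product_prob_spaceI) (rule M)
  have [measurable]: "(\<lambda>\<omega>. h (\<omega> i) (\<omega> j)) \<in> borel_measurable (PiM (insert i J) (\<lambda>_. M))"
    if "j \<in> insert i J" for j
  proof -
    have "(\<lambda>\<omega>. (\<omega> i, \<omega> j)) \<in> PiM (insert i J) (\<lambda>_. M) \<rightarrow>\<^sub>M M \<Otimes>\<^sub>M M"
      using that by measurable
    from measurable_compose[OF this h] show ?thesis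
      by simp
  qed
  have "(\<integral>\<^sup>+\<omega>. g (\<omega> i) * (\<Prod>j\<in>J. h (\<omega> i) (\<omega> j)) \<partial>PiM (insert i J) (\<lambda>_. M))
      = (\<integral>\<^sup>+a. (\<integral>\<^sup>+\<omega>. g a * (\<Prod>j\<in>J. h a (\<omega> j)) \<partial>PiM J (\<lambda>_. M)) \<partial>M)"
    using J by (subst product_nn_integral_insert_rev)
      (auto intro!: nn_integral_cong arg_cong2[where f = "(*)"] prod.cong)
  also have "\<dots> = (\<integral>\<^sup>+a. g a * (\<integral>\<^sup>+y. h a y \<partial>M) ^ card J \<partial>M)"
  proof (rule nn_integral_cong)
    fix a
    assume "a \<in> space M"
    then have h_a: "h a \<in> borel_measurable M"
      using measurable_Pair2[OF h] by simp
    have "(\<integral>\<^sup>+\<omega>. g a * (\<Prod>j\<in>J. h a (\<omega> j)) \<partial>PiM J (\<lambda>_. M))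
        = g a * (\<integral>\<^sup>+\<omega>. (\<Prod>j\<in>J. h a (\<omega> j)) \<partial>PiM J (\<lambda>_. M))"
    proof (intro nn_integral_cmult borel_measurable_prod_ennreal)
      show "(\<lambda>\<omega>. h a (\<omega> j)) \<in> borel_measurable (PiM J (\<lambda>_. M))" if "j \<in> J" for j
        using measurable_compose[OF measurable_component_singleton[OF that] h_a] by simp
    qed
    also have "\<dots> = g a * (\<integral>\<^sup>+y. h a y \<partial>M) ^ card J"
      using product_nn_integral_prod[of J "\<lambda>_. h a"] J(1) h_a by simp
    finally show "(\<integral>\<^sup>+\<omega>. g a * (\<Prod>j\<in>J. h a (\<omega> j)) \<partial>PiM J (\<lambda>_. M)) = g a * (\<integral>\<^sup>+y. h a y \<partial>M) ^ card J" .
  qed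
  finally show ?thesis .
qed

abbreviation Unif01 :: "real measure" where
  "Unif01 \<equiv> uniform_measure lborel {0..1}"

lemma prob_space_Unif01: "prob_space Unif01"
  by (rule prob_space_uniform_measure) auto

lemma nn_integral_Unif01_exp_indicator_less:
  fixes q s :: real
  assumes q: "0 \<le> q" "q \<le> 1"
  shows "(\<integral>\<^sup>+v. ennreal (exp (s * (if v < q then 1 else 0))) \<partial>Unif01) = ennreal (1 + (exp s - 1) * q)"
proof -
  have "{0..1} \<inter> {..<q} = {0..<q}" "{0..1} \<inter> {q..} = {q..1}"
    using q by auto
  then have m: "emeasure Unif01 {..<q} = ennreal q" "emeasure Unif01 {q..} = ennreal (1 - q)"
    using q by (simp_all add: emeasure_uniform_measure divide_ennreal_def)
  have "(\<integral>\<^sup>+v. ennreal (exp (s * (if v < q then 1 else 0))) \<partial>Unif01)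
      = (\<integral>\<^sup>+v. ennreal (exp s) * indicator {..<q} v + indicator {q..} v \<partial>Unif01)"
    by (intro nn_integral_cong) (auto split: split_indicator)
  also have "\<dots> = ennreal (exp s) * ennreal q + ennreal (1 - q)"
    using m by (simp add: nn_integral_add nn_integral_cmult_indicator)
  also have "\<dots> = ennreal (exp s * q + (1 - q))"
    using q by (simp add: ennreal_mult')
  also have "exp s * q + (1 - q) = 1 + (exp s - 1) * q"
    by (simp add: algebra_simps)
  finally show ?thesis .
qed

lemma nn_integral_PiM_Unif01_exp_sum_indicators:
  fixes e :: "'j \<Rightarrow> 'k" and p :: "'j \<Rightarrow> real"
  assumes fin_P: "finite P" and e: "inj_on e J" "e ` J \<subseteq> P" and p: "\<And>j. j \<in> J \<Longrightarrow> p j \<in> {0..1}"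
  shows "(\<integral>\<^sup>+u. ennreal (exp (s * (\<Sum>j\<in>J. if u (e j) < p j then 1 else 0))) \<partial>PiM P (\<lambda>_. Unif01))
       = (\<Prod>j\<in>J. ennreal (1 + (exp s - 1) * p j))"
proof -
  have "finite J"
    using finite_imageD[OF finite_subset[OF e(2) fin_P] e(1)] .
  then have "(\<integral>\<^sup>+u. ennreal (exp (s * (\<Sum>j\<in>J. if u (e j) < p j then 1 else 0))) \<partial>PiM P (\<lambda>_. Unif01))
      = (\<integral>\<^sup>+u. (\<Prod>j\<in>J. ennreal (exp (s * (if u (e j) < p j then 1 else 0)))) \<partial>PiM P (\<lambda>_. Unif01))"
    by (simp add: sum_distrib_left exp_sum prod_ennreal)
  also have "\<dots> = (\<Prod>j\<in>J. \<integral>\<^sup>+v. ennreal (exp (s * (if v < p j then 1 else 0))) \<partial>Unif01)"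
    using prob_space_Unif01 fin_P e by (rule nn_integral_PiM_prod_reindex) measurable
  also have "\<dots> = (\<Prod>j\<in>J. ennreal (1 + (exp s - 1) * p j))"
    using p by (intro prod.cong refl nn_integral_Unif01_exp_indicator_less) auto
  finally show ?thesis .
qed

lemma prob_space_graphon_space: "prob_space (graphon_space n)"
  unfolding graphon_space_def by (intro prob_space_pair prob_space_PiM prob_space_Unif01)

lemma measurable_graphon_latent [measurable]:
  "i < n \<Longrightarrow> (\<lambda>x. fst x i) \<in> borel_measurable (graphon_space n)"
  unfolding graphon_space_def by measurable

lemma measurable_graphon_edge [measurable]:
  "i < j \<Longrightarrow> j < n \<Longrightarrow> (\<lambda>x. snd x (i, j)) \<in> borel_measurable (graphon_space n)"
  unfolding graphon_space_def by measurable

lemma graphon_degree_eq_sum: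
  "real (graphon_degree n \<rho> W x i)
     = (\<Sum>j\<in>{..<n} - {i}. if snd x (min i j, max i j) < \<rho> * W (fst x i) (fst x j) then 1 else 0)"
proof -
  have "{j \<in> {..<n}. graphon_adj \<rho> W x i j}
      = {j \<in> {..<n} - {i}. snd x (min i j, max i j) < \<rho> * W (fst x i) (fst x j)}"
    unfolding graphon_adj_def by auto
  then show ?thesis
    unfolding graphon_degree_def by (simp add: sum.If_cases Int_def)
qed

locale graphon_kernel =
  fixes W :: "real \<Rightarrow> real \<Rightarrow> real"
  assumes W_meas: "(\<lambda>(x, y). W x y) \<in> borel_measurable borel"
    and W_range: "\<And>x y. x \<in> {0..1} \<Longrightarrow> y \<in> {0..1} \<Longrightarrow> W x y \<in> {0..1}"
begin

lemma measurable_W [measurable]: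
  assumes [measurable]: "f \<in> borel_measurable M" "g \<in> borel_measurable M"
  shows "(\<lambda>x. W (f x) (g x)) \<in> borel_measurable M"
proof -
  have "(\<lambda>x. (f x, g x)) \<in> M \<rightarrow>\<^sub>M borel"
    unfolding borel_prod[symmetric] by measurable
  from measurable_comp[OF this W_meas] show ?thesis
    by (simp add: o_def)
qed

lemma borel_measurable_Wbar [measurable]: "Wbar W \<in> borel_measurable borel"
proof -
  have "(\<lambda>x. \<integral>y. indicator {0..1} y *\<^sub>R W x y \<partial>lborel) \<in> borel_measurable borel"
    by (rule lborel.borel_measurable_lebesgue_integral) (simp add: case_prod_beta)
  then show ?thesis
    unfolding Wbar_def[abs_def] set_lebesgue_integral_def .
qed

lemma borel_measurable_graphon_degree [measurable]:
  "i < n \<Longrightarrow> (\<lambda>x. real (graphon_degree n \<rho> W x i)) \<in> borel_measurable (graphon_space n)"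
  unfolding graphon_degree_eq_sum
  by (intro borel_measurable_sum) (auto simp: min_def max_def)

lemma integrable_indicator_W:
  assumes "a \<in> {0..1}"
  shows "integrable lborel (\<lambda>y. indicator {0..1} y * W a y)"
  using W_range[OF assms]
  by (intro integrableI_bounded_set[where A = "{0..1}" and B = 1])
    (auto split: split_indicator intro!: AE_I2)

lemma Wbar_eq_integral: "Wbar W a = (\<integral>y. indicator {0..1} y * W a y \<partial>lborel)"
  by (simp add: Wbar_def set_lebesgue_integral_def)

lemma Wbar_range:
  assumes "a \<in> {0..1}"
  shows "Wbar W a \<in> {0..1}"
proof -
  have "0 \<le> (\<integral>y. indicator {0..1} y * W a y \<partial>lborel)"
    using assms W_range by (intro integral_nonneg_AE) (auto split: split_indicator)
  moreover have "(\<integral>y. indicator {0..1} y * W a y \<partial>lborel) \<le> (\<integral>y. indicator {0..1::real} y \<partial>lborel)"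
    using assms W_range by (intro integral_mono integrable_indicator_W integrable_real_indicator)
      (auto split: split_indicator)
  ultimately show ?thesis
    by (simp add: Wbar_eq_integral)
qed

lemma nn_integral_Unif01_one_plus_W:
  fixes c :: real
  assumes a: "a \<in> {0..1}" and nonneg: "\<And>y. y \<in> {0..1} \<Longrightarrow> 0 \<le> 1 + c * W a y"
  shows "(\<integral>\<^sup>+y. ennreal (1 + c * W a y) \<partial>Unif01) = ennreal (1 + c * Wbar W a)"
proof -
  have "(\<integral>\<^sup>+y. ennreal (1 + c * W a y) \<partial>Unif01)
      = (\<integral>\<^sup>+y. ennreal (indicator {0..1} y + c * (indicator {0..1} y * W a y)) \<partial>lborel)"
    by (subst nn_integral_uniform_measure)
      (auto simp: divide_ennreal_def intro!: nn_integral_cong split: split_indicator)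
  also have "\<dots> = ennreal (\<integral>y. indicator {0..1} y + c * (indicator {0..1} y * W a y) \<partial>lborel)"
    using a nonneg
    by (intro nn_integral_eq_integral AE_I2 Bochner_Integration.integrable_add integrable_mult_right
        integrable_indicator_W integrable_real_indicator) (auto split: split_indicator)
  also have "(\<integral>y. indicator {0..1} y + c * (indicator {0..1} y * W a y) \<partial>lborel) = 1 + c * Wbar W a"
    using a by (simp add: Wbar_eq_integral integrable_indicator_W integrable_real_indicator)
  finally show ?thesis .
qed

lemma nn_integral_edges_exp_graphon_degree:
  fixes \<rho> s c :: real and \<omega> :: "nat \<Rightarrow> real"
  assumes \<rho>: "0 \<le> \<rho>" "\<rho> \<le> 1" and i: "i < n" and \<omega>: "\<And>k. k < n \<Longrightarrow> \<omega> k \<in> {0..1}"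
  shows "(\<integral>\<^sup>+u. ennreal (exp (s * (real (graphon_degree n \<rho> W (\<omega>, u) i) - c)))
            \<partial>PiM {(j, k). j < k \<and> k < n} (\<lambda>_. Unif01))
       = ennreal (exp (- (s * c))) * (\<Prod>j\<in>{..<n} - {i}. ennreal (1 + (exp s - 1) * (\<rho> * W (\<omega> i) (\<omega> j))))"
proof -
  define J where "J = {..<n} - {i}"
  define P where "P = {(j, k). j < k \<and> k < n}"
  define e where "e j = (min i j, max i j)" for j
  have fin_P: "finite P"
    unfolding P_def by (rule finite_subset[of _ "{..<n} \<times> {..<n}"]) auto
  have e: "inj_on e J" "e ` J \<subseteq> P"
    using i by (auto simp: inj_on_def e_def J_def P_def min_def max_def split: if_splits)
  have [measurable]: "e j \<in> P" if "j \<in> J" for j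
    using e(2) that by auto
  have p: "\<rho> * W (\<omega> i) (\<omega> j) \<in> {0..1}" if "j \<in> J" for j
    using that i \<rho> W_range[of "\<omega> i" "\<omega> j"] \<omega> by (auto simp: J_def intro: mult_le_one)
  have "(\<integral>\<^sup>+u. ennreal (exp (s * (real (graphon_degree n \<rho> W (\<omega>, u) i) - c))) \<partial>PiM P (\<lambda>_. Unif01))
      = (\<integral>\<^sup>+u. ennreal (exp (- (s * c)))
           * ennreal (exp (s * (\<Sum>j\<in>J. if u (e j) < \<rho> * W (\<omega> i) (\<omega> j) then 1 else 0))) \<partial>PiM P (\<lambda>_. Unif01))"
    unfolding graphon_degree_eq_sum J_def[symmetric]
    by (simp add: e_def ennreal_exp_mult_exp algebra_simps)
  also have "\<dots> = ennreal (exp (- (s * c)))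
      * (\<integral>\<^sup>+u. ennreal (exp (s * (\<Sum>j\<in>J. if u (e j) < \<rho> * W (\<omega> i) (\<omega> j) then 1 else 0))) \<partial>PiM P (\<lambda>_. Unif01))"
    by (rule nn_integral_cmult) measurable
  also have "\<dots> = ennreal (exp (- (s * c))) * (\<Prod>j\<in>J. ennreal (1 + (exp s - 1) * (\<rho> * W (\<omega> i) (\<omega> j))))"
    using nn_integral_PiM_Unif01_exp_sum_indicators[OF fin_P e, where p = "\<lambda>j. \<rho> * W (\<omega> i) (\<omega> j)"] p
    by simp
  finally show ?thesis
    unfolding P_def J_def .
qed

lemma Wbar_mgf_le:
  fixes \<rho> s :: real and k :: nat
  assumes \<rho>: "0 \<le> \<rho>" "\<rho> \<le> 1" and a: "a \<in> {0..1}"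
  shows "ennreal (exp (- (s * (k * \<rho> * Wbar W a)))) * (\<integral>\<^sup>+y. ennreal (1 + (exp s - 1) * (\<rho> * W a y)) \<partial>Unif01) ^ k
         \<le> ennreal (exp (k * \<rho> * (exp s - 1 - s)))"
proof -
  have "W a y \<in> {0..1}" if "y \<in> {0..1}" for y
    using W_range a that by blast
  then have "(\<integral>\<^sup>+y. ennreal (1 + (exp s - 1) * (\<rho> * W a y)) \<partial>Unif01) = ennreal (1 + (exp s - 1) * (\<rho> * Wbar W a))"
    using a \<rho> nn_integral_Unif01_one_plus_W[of a "(exp s - 1) * \<rho>"]
    by (simp add: mult.assoc one_plus_exp_minus_one_mult_nonneg mult_le_one)
  moreover have "0 \<le> \<rho> * Wbar W a" "\<rho> * Wbar W a \<le> \<rho>"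
    using Wbar_range[OF a] \<rho> by (auto intro: mult_left_le)
  moreover have "0 \<le> 1 + (exp s - 1) * (\<rho> * Wbar W a)"
    using calculation \<rho> by (intro one_plus_exp_minus_one_mult_nonneg) auto
  ultimately have "ennreal (exp (- (s * (k * \<rho> * Wbar W a)))) * (\<integral>\<^sup>+y. ennreal (1 + (exp s - 1) * (\<rho> * W a y)) \<partial>Unif01) ^ k
      = ennreal (exp (- (s * k * (\<rho> * Wbar W a))) * (1 + (exp s - 1) * (\<rho> * Wbar W a)) ^ k)"
    by (simp add: ennreal_power ennreal_mult' mult.assoc)
  also have "\<dots> \<le> ennreal (exp (k * \<rho> * (exp s - 1 - s)))"
    using \<open>0 \<le> \<rho> * Wbar W a\<close> \<open>\<rho> * Wbar W a \<le> \<rho>\<close> \<rho>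
    by (intro ennreal_leI binomial_mgf_le_poisson_mgf) auto
  finally show ?thesis .
qed

lemma graphon_degree_mgf_le:
  fixes s \<rho> :: real
  assumes \<rho>: "0 \<le> \<rho>" "\<rho> \<le> 1" and i: "i < n"
  shows "(\<integral>\<^sup>+x. ennreal (exp (s * (real (graphon_degree n \<rho> W x i) - (real n - 1) * \<rho> * Wbar W (fst x i))))
           \<partial>graphon_space n)
         \<le> ennreal (exp ((real n - 1) * \<rho> * (exp s - 1 - s)))"
    (is "integral\<^sup>N _ ?F \<le> _")
proof -
  define J where "J = {..<n} - {i}"
  define C where "C a = ennreal (exp (- (s * (card J * \<rho> * Wbar W a))))" for a
  let ?\<Omega> = "PiM {..<n} (\<lambda>_. Unif01)" and ?U = "PiM {(j, k). j < k \<and> k < n} (\<lambda>_. Unif01)"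
  have card_J: "real (card J) = real n - 1"
    using i by (simp add: J_def of_nat_diff)
  have n_eq: "{..<n} = insert i J" "i \<notin> J" "finite J"
    using i by (auto simp: J_def)
  interpret U: prob_space ?U
    by (intro prob_space_PiM prob_space_Unif01)
  have "integral\<^sup>N (graphon_space n) ?F = (\<integral>\<^sup>+\<omega>. \<integral>\<^sup>+u. ?F (\<omega>, u) \<partial>?U \<partial>?\<Omega>)"
  proof -
    have "?F \<in> borel_measurable (graphon_space n)"
      using i by measurable
    then show ?thesis
      unfolding graphon_space_def by (rule U.nn_integral_fst[symmetric])
  qed
  also have "\<dots> = (\<integral>\<^sup>+\<omega>. C (\<omega> i) * (\<Prod>j\<in>J. ennreal (1 + (exp s - 1) * (\<rho> * W (\<omega> i) (\<omega> j)))) \<partial>?\<Omega>)"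
  proof (intro nn_integral_cong_AE)
    have "AE \<omega> in ?\<Omega>. \<forall>k\<in>{..<n}. \<omega> k \<in> {0..1}"
      by (intro AE_finite_allI AE_PiM_component prob_space_Unif01 AE_uniform_measureI AE_I2) auto
    then show "AE \<omega> in ?\<Omega>. (\<integral>\<^sup>+u. ?F (\<omega>, u) \<partial>?U)
        = C (\<omega> i) * (\<Prod>j\<in>J. ennreal (1 + (exp s - 1) * (\<rho> * W (\<omega> i) (\<omega> j))))"
      by eventually_elim
        (simp add: C_def J_def card_J[unfolded J_def] nn_integral_edges_exp_graphon_degree[OF \<rho> i] mult.assoc)
  qed
  also have "\<dots> = (\<integral>\<^sup>+a. C a * (\<integral>\<^sup>+y. ennreal (1 + (exp s - 1) * (\<rho> * W a y)) \<partial>Unif01) ^ card J \<partial>Unif01)"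
    unfolding n_eq(1)
    by (intro nn_integral_PiM_insert_prod prob_space_Unif01 n_eq) (unfold C_def, measurable)
  also have "\<dots> \<le> (\<integral>\<^sup>+a. ennreal (exp (card J * \<rho> * (exp s - 1 - s))) \<partial>Unif01)"
    unfolding C_def using \<rho>
    by (intro nn_integral_mono_AE AE_uniform_measureI AE_I2 impI Wbar_mgf_le) auto
  also have "\<dots> = ennreal (exp ((real n - 1) * \<rho> * (exp s - 1 - s)))"
    using prob_space.emeasure_space_1[OF prob_space_Unif01] by (simp add: card_J)
  finally show ?thesis .
qed

lemma graphon_degree_deviation_tail:
  fixes \<rho> t :: real
  assumes \<rho>: "0 \<le> \<rho>" "\<rho> \<le> 1" and t: "0 < t" "t \<le> 1" and n: "2 \<le> n" and i: "i < n"
  shows "measure (graphon_space n)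
           {x \<in> space (graphon_space n).
              \<rho> * t \<le> \<bar>real (graphon_degree n \<rho> W x i) / (real n - 1) - \<rho> * Wbar W (fst x i)\<bar>}
         \<le> 2 * exp (- ((real n - 1) * \<rho> * t\<^sup>2 / 3))"
proof -
  interpret prob_space "graphon_space n"
    by (rule prob_space_graphon_space)
  have m: "0 < real n - 1"
    using n by simp
  have "\<rho> * t \<le> \<bar>d / (real n - 1) - \<rho> * w\<bar> \<longleftrightarrow> (real n - 1) * \<rho> * t \<le> \<bar>d - (real n - 1) * \<rho> * w\<bar>"
    for d w :: real
  proof -
    have "d / (real n - 1) - \<rho> * w = (d - (real n - 1) * \<rho> * w) / (real n - 1)"
      using m by (simp add: field_simps)
    then show ?thesis
      using m by (simp add: abs_div pos_le_divide_eq mult_ac)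
  qed
  then have "{x \<in> space (graphon_space n).
        \<rho> * t \<le> \<bar>real (graphon_degree n \<rho> W x i) / (real n - 1) - \<rho> * Wbar W (fst x i)\<bar>}
      = {x \<in> space (graphon_space n).
        (real n - 1) * \<rho> * t \<le> \<bar>real (graphon_degree n \<rho> W x i) - (real n - 1) * \<rho> * Wbar W (fst x i)\<bar>}"
    by simp
  also have "prob \<dots> \<le> 2 * exp (- ((real n - 1) * \<rho> * t\<^sup>2 / 3))"
    using m \<rho> t i by (intro prob_abs_ge_le_of_poisson_mgf graphon_degree_mgf_le) measurable
  finally show ?thesis .
qed

lemma borel_measurable_graphon_degree_deviation:
  "i < n \<Longrightarrow> (\<lambda>x. \<bar>real (graphon_degree n \<rho> W x i) / (real n - 1) - \<rho> * Wbar W (fst x i)\<bar>)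
     \<in> borel_measurable (graphon_space n)"
  by measurable

end

theorem lemmaC1:
  fixes W :: "real \<Rightarrow> real \<Rightarrow> real" and \<rho> t :: real and n :: nat
  assumes W_meas: "(\<lambda>(x, y). W x y) \<in> borel_measurable borel"
    and W_sym: "\<And>x y. x \<in> {0..1} \<Longrightarrow> y \<in> {0..1} \<Longrightarrow> W x y = W y x"
    and W_range: "\<And>x y. x \<in> {0..1} \<Longrightarrow> y \<in> {0..1} \<Longrightarrow> W x y \<in> {0..1}"
    and rho: "0 < \<rho>" "\<rho> \<le> 1"
    and t: "0 < t" "t < 1"
    and n: "n \<ge> 1"
  shows "measure (graphon_space n)
           {x \<in> space (graphon_space n).
              (MAX i\<in>{..<n}. \<bar>real (graphon_degree n \<rho> W x i) / (real n - 1)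
                                - \<rho> * Wbar W (fst x i)\<bar>) \<ge> \<rho> * t}
         \<le> 2 * real n * (exp (- ((real n - 1) * \<rho> * t\<^sup>2 / 3)) + exp (- (2 * (real n - 1) * t\<^sup>2)))"
proof -
  interpret graphon_kernel W
    using W_meas W_range by unfold_locales
  interpret prob_space "graphon_space n"
    by (rule prob_space_graphon_space)
  define dev where "dev i x = \<bar>real (graphon_degree n \<rho> W x i) / (real n - 1) - \<rho> * Wbar W (fst x i)\<bar>" for i x
  define e1 where "e1 = exp (- ((real n - 1) * \<rho> * t\<^sup>2 / 3))"
  show ?thesis
  proof (cases "n = 1")
    case True
    then show ?thesis
      by (intro order_trans[OF prob_le_1]) simp
  next
    case False
    with n have "2 \<le> n"
      by simp
    have "prob {x \<in> space (graphon_space n). \<rho> * t \<le> (MAX i\<in>{..<n}. dev i x)}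
        \<le> (\<Sum>i<n. prob {x \<in> space (graphon_space n). \<rho> * t \<le> dev i x})"
      using n unfolding dev_def
      by (intro prob_Max_ge_le_sum borel_measurable_graphon_degree_deviation) (auto simp: lessThan_empty_iff)
    also have "\<dots> \<le> (\<Sum>i<n. 2 * e1)"
      using rho t \<open>2 \<le> n\<close> unfolding dev_def e1_def
      by (intro sum_mono graphon_degree_deviation_tail) auto
    also have "\<dots> \<le> 2 * real n * (e1 + exp (- (2 * (real n - 1) * t\<^sup>2)))"
      by (simp add: distrib_left)
    finally show ?thesis
      unfolding dev_def e1_def by simp
  qed
qed

end
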